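(* Let $\Bbbk$ be an algebraically closed field of characteristic zero, $G$ a finite abelian group, $u\in G$ an element of order $2$, and $V$ a finite-dimensional $\Bbbk G$-module with $u\cdot v=-v$ for all $v\in V$, with basis $\{v_1,\dots,v_k\}$ (so $k=\dim V$). Let $\mathcal{A}=\mathcal{A}(V,u,G)$. Then: (1) the family $\{\Bbbk_g: g\in G\}$ is a complete set of representatives of the isomorphism classes of simple left $\mathcal{A}$-comodules; (2) for every $g\in G$, the projective cover of the comodule $\Bbbk_{u^k g}$ is $P_g$; (3) for all $g,h\in G$ there are isomorphisms of left $\mathcal{A}$-comodules $\Bbbk_g\otimes\Bbbk_h\simeq\Bbbk_{gh}$ and $P_g\otimes\Bbbk_h\simeq P_{gh}$.
   Context: The finite supergroup algebra $\mathcal{A}(V,u,G)$ is the Hopf algebra $\wedge(V)\# \Bbbk G$: as an algebra it is generated by the elements of $V$ (linearly) and of $G$, subject to the group relations of $G$ and to $vw+wv=0$ and $gv=(g\cdot v)g$ for $v,w\in V$, $g\in G$; its coproduct, counit and antipode are determined by $\Delta(v)=v\otimes 1+u\otimes v$, $\Delta(g)=g\otimes g$, $\varepsilon(v)=0$, $\varepsilon(g)=1$, $S(v)=-uv$, $S(g)=g^{-1}$. It has basis $\{xg\}$ with $x$ running over a basis of $\wedge(V)$ and $g\in G$. For $g\in G$, $\Bbbk_g$ is the one-dimensional left $\mathcal{A}$-comodule spanned by $w_g$ with coaction $w_g\mapsto g\otimes w_g$. For $g\in G$, $P_g=\wedge(V)g\subseteq\mathcal{A}$ (the span of the elements $xg$,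 $x\in\wedge(V)$), which is a left $\mathcal{A}$-comodule under the restriction of the coproduct $\Delta$. Tensor products of comodules carry the diagonal coaction. *)

theory Defs
  imports Main "HOL-Library.Function_Algebras" "HOL-Library.FuncSet"
    "HOL-Computational_Algebra.Polynomial"
begin

text \<open>
The finite abelian group G is a type 'g of class ab_group_add
(written additively: gh becomes g + h, the unit is 0, u^n g is ((+) u ^^ n) g).
V = k^k with basis v_0,...,v_(k-1); the G-action is given by matrices
act g i j = coefficient of v_i in g . v_j.
A = wedge(V) # kG has basis x_S g  (S a subset of {..<k}, g in G), where
x_S = v_(i1) ... v_(im) for i1 < ... < im.  A basis element is the pair (S, g).
Elements of A are functions (nat set * 'g) => 'k supported on this basis.
\<close>

definition abasis :: "nat \<Rightarrow> (nat set \<times> 'g) set" where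
  "abasis k = {(S, g). S \<subseteq> {..<k}}"

text \<open>Coproduct of A in coordinates: cop_coeff u b c d is the coefficient of
c \<otimes> d in Delta(b).  It is obtained by expanding the product of the
Delta(v_i) = v_i \<otimes> 1 + u \<otimes> v_i over i in S (in increasing order) and
Delta(g) = g \<otimes> g, using u v = - v u:
Delta(x_S g) = sum over disjoint T, R with T \<union> R = S of
   (-1)^#{(i,j). i in R, j in T, i < j}  x_T u^|R| g \<otimes> x_R g.\<close>

definition cop_coeff :: "'g::ab_group_add \<Rightarrow> nat set \<times> 'g \<Rightarrow> nat set \<times> 'g \<Rightarrow> nat set \<times> 'g \<Rightarrow> 'k::comm_ring_1" where
  "cop_coeff u b c d =
     (if fst c \<union> fst d = fst b \<and> fst c \<inter> fst d = {}
         \<and> snd c = ((+) u ^^ card (fst d)) (snd b) \<and> snd d = snd b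
      then (-1) ^ card {(i, j). i \<in> fst d \<and> j \<in> fst c \<and> i < j}
      else 0)"

definition counit_coeff :: "nat set \<times> 'g \<Rightarrow> 'k::comm_ring_1" where
  "counit_coeff b = (if fst b = {} then 1 else 0)"

text \<open>Multiplication of A in coordinates.  g . x_R = sum over Q of
wedge_act act g R Q x_Q (determinant of the R-columns/Q-rows minor of the
matrix of g, as a signed sum over bijections R -> Q), and
x_T x_Q = (-1)^#{(t,q). t in T, q in Q, q < t} x_(T \<union> Q) if T, Q disjoint, else 0.
(x_T g)(x_R h) = x_T (g . x_R) g h.\<close>

definition wedge_act :: "('g \<Rightarrow> nat \<Rightarrow> nat \<Rightarrow> 'k::comm_ring_1) \<Rightarrow> 'g \<Rightarrow> nat set \<Rightarrow> nat set \<Rightarrow> 'k" where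
  "wedge_act act g R Q =
     (\<Sum>\<sigma> \<in> {\<sigma> \<in> R \<rightarrow>\<^sub>E Q. bij_betw \<sigma> R Q}.
        (-1) ^ card {(r, r'). r \<in> R \<and> r' \<in> R \<and> r < r' \<and> \<sigma> r' < \<sigma> r}
        * (\<Prod>r\<in>R. act g (\<sigma> r) r))"

definition mult_coeff :: "('g::ab_group_add \<Rightarrow> nat \<Rightarrow> nat \<Rightarrow> 'k::comm_ring_1)
     \<Rightarrow> nat set \<times> 'g \<Rightarrow> nat set \<times> 'g \<Rightarrow> nat set \<times> 'g \<Rightarrow> 'k" where
  "mult_coeff act b c e =
     (if snd e = snd b + snd c \<and> fst b \<subseteq> fst e
      then (-1) ^ card {(t, q). t \<in> fst b \<and> q \<in> fst e - fst b \<and> q < t}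
           * wedge_act act (snd b) (fst c) (fst e - fst b)
      else 0)"

text \<open>A left A-comodule: a k-vector space (scale, carrier) together with the
coaction m \<mapsto> sum over basis elements b of b \<otimes> coact b m (A is finite
dimensional, so every coaction has this form with coact b linear).\<close>

record ('k, 'm, 'g) comod =
  scl :: "'k \<Rightarrow> 'm \<Rightarrow> 'm"
  car :: "'m set"
  coact :: "nat set \<times> 'g \<Rightarrow> 'm \<Rightarrow> 'm"

definition is_comodule :: "nat \<Rightarrow> 'g::ab_group_add \<Rightarrow> ('k::field, 'm::ab_group_add, 'g) comod \<Rightarrow> bool" where
  "is_comodule k u C \<longleftrightarrow>
     vector_space (scl C) \<and> module.subspace (scl C) (car C) \<and>
     (\<forall>b\<in>abasis k. \<forall>x\<in>car C. coact C b x \<in> car C) \<and>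
     (\<forall>b\<in>abasis k. \<forall>x\<in>car C. \<forall>y\<in>car C. coact C b (x + y) = coact C b x + coact C b y) \<and>
     (\<forall>b\<in>abasis k. \<forall>a. \<forall>x\<in>car C. coact C b (scl C a x) = scl C a (coact C b x)) \<and>
     (\<forall>c\<in>abasis k. \<forall>d\<in>abasis k. \<forall>x\<in>car C.
        coact C d (coact C c x) = (\<Sum>b\<in>abasis k. scl C (cop_coeff u b c d) (coact C b x))) \<and>
     (\<forall>x\<in>car C. (\<Sum>b\<in>abasis k. scl C (counit_coeff b) (coact C b x)) = x)"

definition comod_hom :: "nat \<Rightarrow> ('k::field, 'm::ab_group_add, 'g) comod \<Rightarrow> ('k, 'n::ab_group_add, 'g) comod
     \<Rightarrow> ('m \<Rightarrow> 'n) \<Rightarrow> bool" where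
  "comod_hom k C D f \<longleftrightarrow>
     (\<forall>x\<in>car C. f x \<in> car D) \<and>
     (\<forall>x\<in>car C. \<forall>y\<in>car C. f (x + y) = f x + f y) \<and>
     (\<forall>a. \<forall>x\<in>car C. f (scl C a x) = scl D a (f x)) \<and>
     (\<forall>b\<in>abasis k. \<forall>x\<in>car C. f (coact C b x) = coact D b (f x))"

definition comod_isomorphic :: "nat \<Rightarrow> ('k::field, 'm::ab_group_add, 'g) comod \<Rightarrow> ('k, 'n::ab_group_add, 'g) comod \<Rightarrow> bool" where
  "comod_isomorphic k C D \<longleftrightarrow> (\<exists>f. comod_hom k C D f \<and> bij_betw f (car C) (car D))"

definition subcomodule :: "nat \<Rightarrow> ('k::field, 'm::ab_group_add, 'g) comod \<Rightarrow> 'm set \<Rightarrow> bool" where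
  "subcomodule k C N \<longleftrightarrow>
     module.subspace (scl C) N \<and> N \<subseteq> car C \<and> (\<forall>b\<in>abasis k. \<forall>x\<in>N. coact C b x \<in> N)"

definition simple_comodule :: "nat \<Rightarrow> 'g::ab_group_add \<Rightarrow> ('k::field, 'm::ab_group_add, 'g) comod \<Rightarrow> bool" where
  "simple_comodule k u C \<longleftrightarrow>
     is_comodule k u C \<and> car C \<noteq> {0} \<and> (\<forall>N. subcomodule k C N \<longrightarrow> N = {0} \<or> N = car C)"

text \<open>HOL cannot quantify over
types inside a formula; the comodules M, N range over all comodules whose
underlying spaces live in the types 'c and 'd.  In the main theorem these type
variables are free, hence universally quantified over all types.\<close>

definition comod_projective :: "nat \<Rightarrow> 'g::ab_group_add \<Rightarrow> ('k::field, 'm::ab_group_add, 'g) comod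
     \<Rightarrow> 'c::ab_group_add itself \<Rightarrow> 'd::ab_group_add itself \<Rightarrow> bool" where
  "comod_projective k u P (TC :: 'c itself) (TD :: 'd itself) \<longleftrightarrow>
     is_comodule k u P \<and>
     (\<forall>(M :: ('k, 'c, 'g) comod) (N :: ('k, 'd, 'g) comod) f g.
        is_comodule k u M \<longrightarrow> is_comodule k u N \<longrightarrow>
        comod_hom k M N f \<longrightarrow> f ` car M = car N \<longrightarrow> comod_hom k P N g \<longrightarrow>
        (\<exists>h. comod_hom k P M h \<and> (\<forall>x\<in>car P. f (h x) = g x)))"

definition is_projective_cover :: "nat \<Rightarrow> 'g::ab_group_add \<Rightarrow> ('k::field, 'm::ab_group_add, 'g) comod
     \<Rightarrow> ('k, 'n::ab_group_add, 'g) comod \<Rightarrow> 'c::ab_group_add itself \<Rightarrow> 'd::ab_group_add itself \<Rightarrow> bool" where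
  "is_projective_cover k u P S TC TD \<longleftrightarrow>
     comod_projective k u P TC TD \<and> is_comodule k u S \<and>
     (\<exists>\<pi>. comod_hom k P S \<pi> \<and> \<pi> ` car P = car S \<and>
          (\<forall>N. subcomodule k P N \<and> \<pi> ` N = car S \<longrightarrow> N = car P))"

definition fspace :: "'i set \<Rightarrow> ('i \<Rightarrow> 'k::zero) set" where
  "fspace I = {f. \<forall>x. x \<notin> I \<longrightarrow> f x = 0}"

definition fscale :: "'k::times \<Rightarrow> ('i \<Rightarrow> 'k) \<Rightarrow> ('i \<Rightarrow> 'k)" where
  "fscale a f = (\<lambda>x. a * f x)"

definition indic :: "'i \<Rightarrow> 'i \<Rightarrow> 'k::zero_neq_one" where
  "indic i = (\<lambda>j. if j = i then 1 else 0)"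

text \<open>The one-dimensional comodule k_g: spanned by w_g (here the function
() \<mapsto> 1), coaction w_g \<mapsto> g \<otimes> w_g.\<close>

definition kg :: "'g \<Rightarrow> ('k::field, unit \<Rightarrow> 'k, 'g) comod" where
  "kg g = \<lparr>scl = fscale, car = fspace UNIV,
           coact = (\<lambda>b w. if b = ({}, g) then w else 0)\<rparr>"

text \<open>P_g = wedge(V) g \<subseteq> A with coaction the restriction of Delta.\<close>

definition Pg :: "nat \<Rightarrow> 'g::ab_group_add \<Rightarrow> 'g \<Rightarrow> ('k::field, nat set \<times> 'g \<Rightarrow> 'k, 'g) comod" where
  "Pg k u g = \<lparr>scl = fscale, car = fspace {(S, h). S \<subseteq> {..<k} \<and> h = g},
     coact = (\<lambda>c a. (\<lambda>d. \<Sum>b\<in>abasis k. a b * cop_coeff u b c d))\<rparr>"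

text \<open>Tensor product of two coordinate comodules (underlying spaces fspace I,
fspace J with I, J finite), underlying space fspace (I \<times> J) = fspace I \<otimes> fspace J,
with the diagonal coaction m \<otimes> n \<mapsto> m_(-1) n_(-1) \<otimes> m_0 \<otimes> n_0.\<close>

definition comod_tensor :: "nat \<Rightarrow> ('g::ab_group_add \<Rightarrow> nat \<Rightarrow> nat \<Rightarrow> 'k::field)
     \<Rightarrow> 'i set \<Rightarrow> ('k, 'i \<Rightarrow> 'k, 'g) comod \<Rightarrow> 'j set \<Rightarrow> ('k, 'j \<Rightarrow> 'k, 'g) comod
     \<Rightarrow> ('k, 'i \<times> 'j \<Rightarrow> 'k, 'g) comod" where
  "comod_tensor k act I M J N =
     \<lparr>scl = fscale, car = fspace (I \<times> J),
      coact = (\<lambda>e F. (\<lambda>(i, j). \<Sum>b\<in>abasis k. \<Sum>c\<in>abasis k. mult_coeff act b c e *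
                 (\<Sum>p\<in>I \<times> J. F p * coact M b (indic (fst p)) i * coact N c (indic (snd p)) j)))\<rparr>"

end

theory Submission
  imports Defs
begin

text \<open>
A nonzero comodule contains a primitive vector: among the nonzero components x_b of a
vector x pick one whose exterior part has maximal size; applying the coaction once more can
only enlarge the exterior part, so every component with nonempty exterior part vanishes.
The components of a primitive vector along the group-likes ({}, g) are group-like, and a
simple comodule is spanned by any group-like vector it contains, so it is some k_g; two
different k_g are never isomorphic.

P_g is cyclic over the dual algebra of A, generated by its top element t = x_{0..k-1} g,
which is group-like of weight u^k g for the component ({}, u^k g) of the coaction.
Given an epimorphism f : M -> N and q : P_g -> N, lift q t to m_0 in M and project it to
the homogeneous component m of weight u^k g; sending a functional alpha with alpha . t = x
to alpha . m gives the required lift, because components of m of other weights vanish.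
Taking the top coefficient maps P_g onto k_(u^k g); a subcomodule containing a vector with
top coefficient 1 contains every x_S g (apply the coaction component that strips the
complement of S and subtract the smaller basis vectors already obtained), so this
epimorphism is essential.  Tensoring with k_h only translates the group parts by h.
\<close>

lemma sum_eq_single:
  assumes "finite A" "\<And>x. x \<in> A \<Longrightarrow> x \<noteq> a \<Longrightarrow> f x = 0"
  shows "sum f A = (if a \<in> A then f a else 0)"
proof -
  have "sum f A = (\<Sum>x\<in>A. if x = a then f x else 0)"
    using assms(2) by (intro sum.cong) auto
  then show ?thesis using assms(1) by simp
qed

lemma sum_apply: "(\<Sum>b\<in>A. f b) x = (\<Sum>b\<in>A. f b x)"
  by (induct A rule: infinite_finite_induct) auto

section \<open>Coefficients of the coproduct\<close>

lemma abasis_eq: "abasis k = Pow {..<k} \<times> UNIV"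
  by (auto simp: abasis_def)

lemma finite_abasis [simp]: "finite (abasis k :: (nat set \<times> 'g::finite) set)"
  by (simp add: abasis_eq)

lemma mem_abasis [simp]: "(S, g) \<in> abasis k \<longleftrightarrow> S \<subseteq> {..<k}"
  by (simp add: abasis_def)

lemma funpow_plus: "((+) u ^^ n) (g::'g::ab_group_add) = ((+) u ^^ n) 0 + g"
  by (induct n) (auto simp: add.assoc)

lemma funpow_plus_eq_iff [simp]:
  "((+) u ^^ n) g = ((+) u ^^ n) h \<longleftrightarrow> g = (h::'g::ab_group_add)"
  by (subst (1 2) funpow_plus) simp

definition cross_sign :: "nat set \<Rightarrow> nat set \<Rightarrow> 'k::comm_ring_1" where
  "cross_sign A B = (-1) ^ card {(i, j). i \<in> A \<and> j \<in> B \<and> i < j}"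

lemma cross_sign_empty [simp]: "cross_sign {} B = 1" "cross_sign A {} = 1"
  by (simp_all add: cross_sign_def)

lemma cross_sign_square [simp]: "cross_sign A B * cross_sign A B = 1"
  by (simp add: cross_sign_def flip: power_add)

lemma cross_sign_neq_zero [simp]: "cross_sign A B \<noteq> (0::'k::comm_ring_1)"
  using cross_sign_square[of A B] by (metis mult_zero_left zero_neq_one)

lemma cross_sign_Un_left:
  assumes "finite A" "finite B" "finite C" "A \<inter> B = {}"
  shows "cross_sign (A \<union> B) C = cross_sign A C * cross_sign B C"
proof -
  have "{(i, j). i \<in> A \<union> B \<and> j \<in> C \<and> i < j}
      = {(i, j). i \<in> A \<and> j \<in> C \<and> i < j} \<union> {(i, j). i \<in> B \<and> j \<in> C \<and> i < j}"
    by auto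
  moreover have "finite {(i, j). i \<in> X \<and> j \<in> C \<and> i < j}" if "finite X" for X
    by (rule finite_subset[of _ "X \<times> C"]) (use that assms in auto)
  ultimately show ?thesis using assms unfolding cross_sign_def
    by (simp only:) (subst card_Un_disjoint, auto simp: power_add)
qed

lemma cross_sign_Un_right:
  assumes "finite A" "finite B" "finite C" "B \<inter> C = {}"
  shows "cross_sign A (B \<union> C) = cross_sign A B * cross_sign A C"
proof -
  have "{(i, j). i \<in> A \<and> j \<in> B \<union> C \<and> i < j}
      = {(i, j). i \<in> A \<and> j \<in> B \<and> i < j} \<union> {(i, j). i \<in> A \<and> j \<in> C \<and> i < j}"
    by auto
  moreover have "finite {(i, j). i \<in> A \<and> j \<in> X \<and> i < j}" if "finite X" for X
    by (rule finite_subset[of _ "A \<times> X"]) (use that assms in auto)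
  ultimately show ?thesis using assms unfolding cross_sign_def
    by (simp only:) (subst card_Un_disjoint, auto simp: power_add)
qed

lemma cop_coeff_eq [simp]:
  "cop_coeff u (S, g) (T, h) (R, l) =
     (if T \<union> R = S \<and> T \<inter> R = {} \<and> h = ((+) u ^^ card R) g \<and> l = g
      then cross_sign R T else 0)"
  by (simp add: cop_coeff_def cross_sign_def)

lemma cop_coeff_coassoc:
  fixes u :: "'g::{finite,ab_group_add}"
  assumes "b \<in> abasis k"
  shows "(\<Sum>b'\<in>abasis k. cop_coeff u b c b' * cop_coeff u b' d e)
       = (\<Sum>b'\<in>abasis k. cop_coeff u b' c d * (cop_coeff u b b' e :: 'k::comm_ring_1))"
proof -
  obtain S g C gc D gd E ge where
    pairs: "b = (S, g)" "c = (C, gc)" "d = (D, gd)" "e = (E, ge)"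
    by (metis prod.exhaust)
  have S: "S \<subseteq> {..<k}" "finite S"
    using assms pairs finite_subset by auto
  let ?cond = "C \<union> D \<union> E = S \<and> C \<inter> D = {} \<and> C \<inter> E = {} \<and> D \<inter> E = {} \<and> ge = g
       \<and> gd = ((+) u ^^ card E) g \<and> gc = ((+) u ^^ (card D + card E)) g"
  let ?val = "cross_sign D C * cross_sign E C * cross_sign E D :: 'k"
  have "(\<Sum>b'\<in>abasis k. cop_coeff u b c b' * cop_coeff u b' d e)
      = cop_coeff u b c (D \<union> E, ge) * cop_coeff u (D \<union> E, ge) d e"
    using S by (subst sum_eq_single[where a = "(D \<union> E, ge)"]) (auto simp: pairs split: if_splits)
  also have "\<dots> = (if ?cond then ?val else 0)"
  proof (cases ?cond)
    case True
    then have "finite C" "finite D" "finite E" using S finite_subset by blast+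
    with True show ?thesis
      by (auto simp: pairs card_Un_disjoint cross_sign_Un_left funpow_add)
  next
    case False
    have "cop_coeff u b c (D \<union> E, ge) * cop_coeff u (D \<union> E, ge) d e = (0::'k)"
    proof (rule ccontr)
      assume "cop_coeff u b c (D \<union> E, ge) * cop_coeff u (D \<union> E, ge) d e \<noteq> (0::'k)"
      then have eqs: "C \<union> (D \<union> E) = S" "C \<inter> (D \<union> E) = {}" "gc = ((+) u ^^ card (D \<union> E)) g"
          "ge = g" "D \<inter> E = {}" "gd = ((+) u ^^ card E) g"
        by (auto simp: pairs split: if_splits)
      then have "card (D \<union> E) = card D + card E"
        using S by (metis card_Un_disjoint finite_Un finite_subset sup_ge2)
      with eqs False show False by (auto simp: funpow_add)
    qed
    then show ?thesis by (simp only: if_not_P[OF False])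
  qed
  also have "\<dots> = cop_coeff u (C \<union> D, gd) c d * cop_coeff u b (C \<union> D, gd) e"
  proof (cases ?cond)
    case True
    then have "finite C" "finite D" "finite E" using S finite_subset by blast+
    with True show ?thesis
      by (auto simp: pairs cross_sign_Un_right funpow_add)
  next
    case False
    then show ?thesis
      by (auto simp: pairs funpow_add)
  qed
  also have "\<dots> = (\<Sum>b'\<in>abasis k. cop_coeff u b' c d * cop_coeff u b b' e)"
    using S by (subst sum_eq_single[where a = "(C \<union> D, gd)"]) (auto simp: pairs split: if_splits)
  finally show ?thesis .
qed

lemma counit_cop_coeff:
  fixes u :: "'g::{finite,ab_group_add}"
  assumes "b \<in> abasis k"
  shows "(\<Sum>c\<in>abasis k. counit_coeff c * cop_coeff u b c e) = (if e = b then 1 else (0::'k::comm_ring_1))"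
proof -
  obtain S g E h where b: "b = (S, g)" and e: "e = (E, h)" by fastforce
  show ?thesis
    by (subst sum_eq_single[where a = "({}, ((+) u ^^ card S) g)"])
       (auto simp: b e counit_coeff_def split: if_splits)
qed

lemma cop_coeff_translate:
  "cop_coeff u (B, g + h) (E, l) (S, m) = cop_coeff u (B, g) (E, l - h) (S, m - (h::'g::ab_group_add))"
  by (simp add: funpow_plus[where n = "card S" and g = "g + h"] funpow_plus[where n = "card S" and g = g]
      diff_eq_eq add.assoc)

lemma sum_abasis_translate:
  "(\<Sum>b\<in>abasis k. f b) = (\<Sum>b\<in>abasis k. f (fst b, snd b + (h::'g::ab_group_add)))"
  by (rule sum.reindex_bij_witness[where i = "\<lambda>b. (fst b, snd b + h)"
        and j = "\<lambda>b. (fst b, snd b - h)"]) (auto simp: abasis_def)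

section \<open>Coordinate comodules\<close>

lemma vector_space_fscale: "vector_space (fscale :: 'k::field \<Rightarrow> ('i \<Rightarrow> 'k) \<Rightarrow> _)"
  by unfold_locales (auto simp: fscale_def fun_eq_iff algebra_simps)

lemma module_fscale: "module (fscale :: 'k::field \<Rightarrow> ('i \<Rightarrow> 'k) \<Rightarrow> _)"
  using vector_space_fscale module_iff_vector_space by blast

lemma subspace_fspace: "module.subspace (fscale :: 'k::field \<Rightarrow> ('i \<Rightarrow> 'k) \<Rightarrow> _) (fspace I)"
  by (auto simp: module.subspace_def[OF module_fscale] fspace_def fscale_def)

lemma fspace_UNIV [simp]: "fspace UNIV = UNIV"
  by (auto simp: fspace_def)

lemma fspace_outside: "f \<in> fspace I \<Longrightarrow> x \<notin> I \<Longrightarrow> f x = 0"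
  by (simp add: fspace_def)

lemma sum_indic_fspace:
  assumes "finite I" "f \<in> fspace I"
  shows "(\<Sum>p\<in>I. fscale (f p) (indic p)) = (f :: 'i \<Rightarrow> 'k::comm_ring_1)"
proof
  fix x
  have "(\<Sum>p\<in>I. fscale (f p) (indic p)) x = (\<Sum>p\<in>I. if x = p then f x else 0)"
    unfolding sum_apply by (intro sum.cong) (auto simp: fscale_def indic_def)
  also have "\<dots> = f x"
    using assms by (simp add: fspace_outside)
  finally show "(\<Sum>p\<in>I. fscale (f p) (indic p)) x = f x" .
qed

lemma kg_simps [simp]:
  "scl (kg g) = fscale" "car (kg g) = UNIV"
  "coact (kg g) b w = (if b = ({}, g) then w else 0)"
  by (simp_all add: kg_def)

lemma is_comodule_kg:
  fixes u :: "'g::{finite,ab_group_add}"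
  shows "is_comodule k u (kg g :: ('k::field, unit \<Rightarrow> 'k, 'g) comod)"
proof -
  have "(\<Sum>b\<in>abasis k. fscale (cop_coeff u b c d) (if b = ({}, g) then x else 0))
      = (if d = ({}, g) then if c = ({}, g) then x else 0 else 0)"
    for c d :: "nat set \<times> 'g" and x :: "unit \<Rightarrow> 'k"
    by (subst sum_eq_single[where a = "({}, g)"]) (cases c; cases d; auto simp: fscale_def fun_eq_iff)+
  moreover have "(\<Sum>b\<in>abasis k. fscale (counit_coeff b) (if b = ({}, g) then x else 0)) = x"
    for x :: "unit \<Rightarrow> 'k"
    by (subst sum_eq_single[where a = "({}, g)"]) (auto simp: fscale_def counit_coeff_def)
  ultimately show ?thesis
    using vector_space_fscale subspace_fspace[of UNIV]
    by (auto simp: is_comodule_def fscale_def fun_eq_iff)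
qed

definition Pbasis :: "nat \<Rightarrow> 'g \<Rightarrow> (nat set \<times> 'g) set" where
  "Pbasis k g = {(S, h). S \<subseteq> {..<k} \<and> h = g}"

lemma Pbasis_subset_abasis: "Pbasis k g \<subseteq> abasis k"
  by (auto simp: Pbasis_def)

lemma mem_Pbasis [simp]: "(S, h) \<in> Pbasis k g \<longleftrightarrow> S \<subseteq> {..<k} \<and> h = g"
  by (simp add: Pbasis_def)

lemma Pbasis_eq_image: "Pbasis k g = (\<lambda>S. (S, g)) ` Pow {..<k}"
  by (auto simp: Pbasis_def)

lemma finite_Pbasis [simp]: "finite (Pbasis k g)"
  by (simp add: Pbasis_eq_image)

lemma sum_Pbasis: "(\<Sum>p\<in>Pbasis k g. f p) = (\<Sum>S\<in>Pow {..<k}. f (S, g))"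
  by (simp add: Pbasis_eq_image sum.reindex inj_on_def)

lemma Pg_simps [simp]:
  "scl (Pg k u g) = fscale" "car (Pg k u g) = fspace (Pbasis k g)"
  by (simp_all add: Pg_def Pbasis_def)

lemma coact_Pg: "coact (Pg k u g) c a d = (\<Sum>b\<in>abasis k. a b * cop_coeff u b c d)"
  by (simp add: Pg_def)

lemma is_comodule_Pg:
  fixes u :: "'g::{finite,ab_group_add}"
  shows "is_comodule k u (Pg k u g :: ('k::field, nat set \<times> 'g \<Rightarrow> 'k, 'g) comod)"
  unfolding is_comodule_def
proof (intro conjI ballI allI)
  fix b :: "nat set \<times> 'g" and x :: "nat set \<times> 'g \<Rightarrow> 'k"
  assume x: "x \<in> car (Pg k u g)"
  have "x b' * cop_coeff u b' b d = 0" if "b' \<in> abasis k" "d \<notin> Pbasis k g" for b' d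
    using that fspace_outside[of x "Pbasis k g" b'] x by (cases b; cases b'; cases d) auto
  then show "coact (Pg k u g) b x \<in> car (Pg k u g)"
    unfolding Pg_simps fspace_def mem_Collect_eq coact_Pg by (blast intro: sum.neutral)
next
  fix c d :: "nat set \<times> 'g" and x :: "nat set \<times> 'g \<Rightarrow> 'k"
  have "(\<Sum>b'\<in>abasis k. (\<Sum>b\<in>abasis k. x b * cop_coeff u b c b') * cop_coeff u b' d e)
      = (\<Sum>b'\<in>abasis k. cop_coeff u b' c d * (\<Sum>b\<in>abasis k. x b * cop_coeff u b b' e))" for e
  proof -
    have "(\<Sum>b'\<in>abasis k. (\<Sum>b\<in>abasis k. x b * cop_coeff u b c b') * cop_coeff u b' d e)
        = (\<Sum>b\<in>abasis k. x b * (\<Sum>b'\<in>abasis k. cop_coeff u b c b' * cop_coeff u b' d e))"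
      by (simp add: sum_distrib_left sum_distrib_right mult.assoc) (rule sum.swap)
    also have "\<dots> = (\<Sum>b\<in>abasis k. x b * (\<Sum>b'\<in>abasis k. cop_coeff u b' c d * cop_coeff u b b' e))"
      by (simp add: cop_coeff_coassoc)
    also have "\<dots> = (\<Sum>b'\<in>abasis k. cop_coeff u b' c d * (\<Sum>b\<in>abasis k. x b * cop_coeff u b b' e))"
      by (simp add: sum_distrib_left sum_distrib_right mult.assoc mult.left_commute) (rule sum.swap)
    finally show ?thesis .
  qed
  then show "coact (Pg k u g) d (coact (Pg k u g) c x)
      = (\<Sum>b\<in>abasis k. scl (Pg k u g) (cop_coeff u b c d) (coact (Pg k u g) b x))"
    by (simp add: fun_eq_iff sum_apply fscale_def coact_Pg)
next
  fix x :: "nat set \<times> 'g \<Rightarrow> 'k"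
  assume x: "x \<in> car (Pg k u g)"
  have "(\<Sum>c\<in>abasis k. counit_coeff c * (\<Sum>b\<in>abasis k. x b * cop_coeff u b c e)) = x e" for e
  proof -
    have "(\<Sum>c\<in>abasis k. counit_coeff c * (\<Sum>b\<in>abasis k. x b * cop_coeff u b c e))
        = (\<Sum>b\<in>abasis k. x b * (\<Sum>c\<in>abasis k. counit_coeff c * cop_coeff u b c e))"
      by (simp add: sum_distrib_left sum_distrib_right mult.assoc mult.left_commute) (rule sum.swap)
    also have "\<dots> = (\<Sum>b\<in>abasis k. if e = b then x b else 0)"
      by (simp add: counit_cop_coeff if_distrib cong: if_cong)
    also have "\<dots> = x e"
      using x Pbasis_subset_abasis[of k g] by (auto intro: fspace_outside)
    finally show ?thesis .
  qed
  then show "(\<Sum>b\<in>abasis k. scl (Pg k u g) (counit_coeff b) (coact (Pg k u g) b x)) = x"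
    by (simp add: fun_eq_iff sum_apply fscale_def coact_Pg)
qed (auto simp: vector_space_fscale subspace_fspace fun_eq_iff fscale_def algebra_simps
      sum.distrib sum_distrib_left coact_Pg)

lemma coact_Pg_indic:
  fixes u :: "'g::{finite,ab_group_add}"
  assumes "p \<in> abasis k"
  shows "coact (Pg k u g :: ('k::field, nat set \<times> 'g \<Rightarrow> 'k, 'g) comod) b (indic p) i = cop_coeff u p b i"
  using assms unfolding coact_Pg by (subst sum_eq_single[where a = p]) (auto simp: indic_def)

lemma indic_in_Pg: "p \<in> Pbasis k g \<Longrightarrow> indic p \<in> car (Pg k u g)"
  by (auto simp: fspace_def indic_def)

section \<open>Comodules and their morphisms\<close>

text \<open>The action alpha . y of a functional alpha on A (an element of the dual algebra)
on a comodule.\<close>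

definition dual_act ::
    "('k::field, 'm::ab_group_add, 'g) comod \<Rightarrow> nat \<Rightarrow> (nat set \<times> 'g \<Rightarrow> 'k) \<Rightarrow> 'm \<Rightarrow> 'm" where
  "dual_act C k \<alpha> y = (\<Sum>b\<in>abasis k. scl C (\<alpha> b) (coact C b y))"

locale comodule =
  fixes k :: nat and u :: "'g::{finite,ab_group_add}"
    and C :: "('k::field, 'm::ab_group_add, 'g) comod"
  assumes is_comodule: "is_comodule k u C"
begin

sublocale V: vector_space "scl C"
  using is_comodule by (simp add: is_comodule_def)

lemma subspace_car: "V.subspace (car C)"
  using is_comodule by (simp add: is_comodule_def)

lemma zero_in_car: "0 \<in> car C"
  by (rule V.subspace_0[OF subspace_car])

lemma add_in_car: "x \<in> car C \<Longrightarrow> y \<in> car C \<Longrightarrow> x + y \<in> car C"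
  by (rule V.subspace_add[OF subspace_car])

lemma scale_in_car: "x \<in> car C \<Longrightarrow> scl C a x \<in> car C"
  by (rule V.subspace_scale[OF subspace_car])

lemma sum_in_car: "(\<And>i. i \<in> I \<Longrightarrow> f i \<in> car C) \<Longrightarrow> sum f I \<in> car C"
  by (rule V.subspace_sum[OF subspace_car])

lemma coact_in_car: "b \<in> abasis k \<Longrightarrow> x \<in> car C \<Longrightarrow> coact C b x \<in> car C"
  using is_comodule by (simp add: is_comodule_def)

lemma coact_add:
  "b \<in> abasis k \<Longrightarrow> x \<in> car C \<Longrightarrow> y \<in> car C \<Longrightarrow> coact C b (x + y) = coact C b x + coact C b y"
  using is_comodule by (simp add: is_comodule_def)

lemma coact_scale: "b \<in> abasis k \<Longrightarrow> x \<in> car C \<Longrightarrow> coact C b (scl C a x) = scl C a (coact C b x)"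
  using is_comodule by (simp add: is_comodule_def)

lemma coact_coassoc:
  "c \<in> abasis k \<Longrightarrow> d \<in> abasis k \<Longrightarrow> x \<in> car C \<Longrightarrow>
   coact C d (coact C c x) = (\<Sum>b\<in>abasis k. scl C (cop_coeff u b c d) (coact C b x))"
  using is_comodule by (simp add: is_comodule_def)

lemma counit_law: "x \<in> car C \<Longrightarrow> (\<Sum>b\<in>abasis k. scl C (counit_coeff b) (coact C b x)) = x"
  using is_comodule by (simp add: is_comodule_def)

lemma coact_zero: "b \<in> abasis k \<Longrightarrow> coact C b 0 = 0"
  using coact_add[of b 0 0] zero_in_car by simp

lemma coact_sum:
  assumes "b \<in> abasis k" "\<And>i. i \<in> I \<Longrightarrow> f i \<in> car C"
  shows "coact C b (sum f I) = (\<Sum>i\<in>I. coact C b (f i))"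
  using assms(2)
  by (induct I rule: infinite_finite_induct) (auto simp: coact_zero coact_add sum_in_car assms(1))

lemma coact_coact_grouplike:
  assumes "b \<in> abasis k" "y \<in> car C"
  shows "coact C b (coact C ({}, h) y) = (if h = ((+) u ^^ card (fst b)) (snd b) then coact C b y else 0)"
proof -
  obtain S l where b: "b = (S, l)" by fastforce
  have "coact C b (coact C ({}, h) y) = (\<Sum>b'\<in>abasis k. scl C (cop_coeff u b' ({}, h) b) (coact C b' y))"
    using assms by (simp add: coact_coassoc)
  also have "\<dots> = scl C (cop_coeff u b ({}, h) b) (coact C b y)"
    using assms(1) by (subst sum_eq_single[where a = b]) (auto simp: b split: if_splits)
  finally show ?thesis
    by (simp add: b)
qed

lemma dual_act_in_car: "y \<in> car C \<Longrightarrow> dual_act C k \<alpha> y \<in> car C"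
  unfolding dual_act_def by (intro sum_in_car scale_in_car coact_in_car) auto

lemma dual_act_add: "dual_act C k (\<lambda>b. \<alpha> b + \<beta> b) y = dual_act C k \<alpha> y + dual_act C k \<beta> y"
  unfolding dual_act_def by (simp add: V.scale_left_distrib sum.distrib)

lemma dual_act_scale: "dual_act C k (\<lambda>b. a * \<alpha> b) y = scl C a (dual_act C k \<alpha> y)"
  unfolding dual_act_def by (simp add: V.scale_sum_right)

lemma coact_dual_act:
  assumes c: "c \<in> abasis k" and y: "y \<in> car C"
  shows "coact C c (dual_act C k \<alpha> y) = dual_act C k (\<lambda>b'. \<Sum>b\<in>abasis k. \<alpha> b * cop_coeff u b' b c) y"
proof -
  have "coact C c (dual_act C k \<alpha> y) = (\<Sum>b\<in>abasis k. scl C (\<alpha> b) (coact C c (coact C b y)))"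
    unfolding dual_act_def using assms
    by (subst coact_sum) (auto intro!: sum.cong scale_in_car coact_in_car simp: coact_scale coact_in_car)
  also have "\<dots> = (\<Sum>b\<in>abasis k. \<Sum>b'\<in>abasis k. scl C (\<alpha> b * cop_coeff u b' b c) (coact C b' y))"
    using assms by (simp add: coact_coassoc V.scale_sum_right)
  also have "\<dots> = dual_act C k (\<lambda>b'. \<Sum>b\<in>abasis k. \<alpha> b * cop_coeff u b' b c) y"
    unfolding dual_act_def by (subst sum.swap) (simp add: V.scale_sum_left)
  finally show ?thesis .
qed

lemma exists_primitive:
  assumes "x \<in> car C" "x \<noteq> 0"
  obtains y where "y \<in> car C" "y \<noteq> 0" "\<And>b. b \<in> abasis k \<Longrightarrow> fst b \<noteq> {} \<Longrightarrow> coact C b y = 0"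
proof -
  define B where "B = {b \<in> abasis k. coact C b x \<noteq> 0}"
  have "B \<noteq> {}"
  proof
    assume "B = {}"
    then have "coact C b x = 0" if "b \<in> abasis k" for b
      using that unfolding B_def by blast
    then show False
      using counit_law[OF assms(1)] assms(2) by simp
  qed
  moreover have "finite B" unfolding B_def by simp
  ultimately obtain c where c: "c \<in> B" and c_max: "\<And>b. b \<in> B \<Longrightarrow> card (fst b) \<le> card (fst c)"
  proof -
    let ?n = "Max ((\<lambda>b. card (fst b)) ` B)"
    have "?n \<in> (\<lambda>b. card (fst b)) ` B"
      using \<open>finite B\<close> \<open>B \<noteq> {}\<close> by (intro Max_in) auto
    moreover have "card (fst b) \<le> ?n" if "b \<in> B" for b
      using \<open>finite B\<close> that by (intro Max_ge) auto
    ultimately show thesis using that by force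
  qed
  have "coact C d (coact C c x) = 0" if d: "d \<in> abasis k" "fst d \<noteq> {}" for d
  proof -
    have "scl C (cop_coeff u b c d) (coact C b x) = 0" if b: "b \<in> abasis k" for b
    proof (cases "cop_coeff u b c d = (0::'k)")
      case False
      then have "fst c \<union> fst d = fst b" "fst c \<inter> fst d = {}"
        by (cases b; cases c; cases d; simp split: if_splits)+
      moreover have "finite (fst b)"
        using b finite_subset by (cases b) auto
      ultimately have "card (fst c) < card (fst b)"
        using d(2) by (metis card_Un_disjoint card_gt_0_iff finite_Un less_add_same_cancel1)
      then have "b \<notin> B" using c_max by fastforce
      then show ?thesis using b unfolding B_def by simp
    qed simp
    then have "(\<Sum>b\<in>abasis k. scl C (cop_coeff u b c d) (coact C b x)) = 0"
      by (blast intro: sum.neutral)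
    then show ?thesis using c d assms(1) unfolding B_def by (simp add: coact_coassoc)
  qed
  then show ?thesis using that c coact_in_car assms(1) unfolding B_def by blast
qed

lemma exists_grouplike:
  assumes "x \<in> car C" "x \<noteq> 0"
  obtains g z where "z \<in> car C" "z \<noteq> 0" "\<And>b. b \<in> abasis k \<Longrightarrow> coact C b z = (if b = ({}, g) then z else 0)"
proof -
  obtain y where y: "y \<in> car C" "y \<noteq> 0" and prim: "\<And>b. b \<in> abasis k \<Longrightarrow> fst b \<noteq> {} \<Longrightarrow> coact C b y = 0"
    using exists_primitive[OF assms] by blast
  obtain b where b: "b \<in> abasis k" "counit_coeff b \<noteq> (0::'k)" "coact C b y \<noteq> 0"
    using counit_law[OF y(1)] y(2) by (metis (no_types, lifting) V.scale_eq_0_iff sum.neutral)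
  then obtain g where bg: "b = ({}, g)" by (cases b) (auto simp: counit_coeff_def split: if_splits)
  have "coact C b' (coact C ({}, g) y) = (if b' = ({}, g) then coact C ({}, g) y else 0)"
    if "b' \<in> abasis k" for b'
    using that prim[OF that] coact_coact_grouplike[OF that y(1), of g]
    by (cases b') (auto simp: coact_coact_grouplike[OF _ y(1)])
  then show ?thesis
    using that[of "coact C ({}, g) y" g] coact_in_car b y(1) bg by auto
qed

lemma isomorphic_sym:
  fixes D :: "('k, 'n::ab_group_add, 'g) comod"
  assumes "comod_isomorphic k C D"
  shows "comod_isomorphic k D C"
proof -
  obtain f where hom: "comod_hom k C D f" and bij: "bij_betw f (car C) (car D)"
    using assms unfolding comod_isomorphic_def by blast
  define f' where "f' = inv_into (car C) f"
  have inj: "inj_on f (car C)" and img: "f ` car C = car D"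
    using bij by (auto simp: bij_betw_def)
  have f'_in: "f' y \<in> car C" and f_f': "f (f' y) = y" if "y \<in> car D" for y
    using that img by (auto simp: f'_def f_inv_into_f inv_into_into)
  have f'_eq: "f' y = x" if "x \<in> car C" "f x = y" for x y
    using that inj by (simp add: f'_def inv_into_f_eq)
  have "comod_hom k D C f'"
    unfolding comod_hom_def
  proof (intro conjI ballI allI)
    fix y y' assume "y \<in> car D" "y' \<in> car D"
    then show "f' (y + y') = f' y + f' y'"
      using hom f'_in f_f' by (intro f'_eq) (auto simp: add_in_car comod_hom_def)
  next
    fix a y assume "y \<in> car D"
    then show "f' (scl D a y) = scl C a (f' y)"
      using hom f'_in f_f' by (intro f'_eq) (auto simp: scale_in_car comod_hom_def)
  next
    fix b :: "nat set \<times> 'g" and y assume "b \<in> abasis k" "y \<in> car D"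
    then show "f' (coact D b y) = coact C b (f' y)"
      using hom f'_in f_f' by (intro f'_eq) (auto simp: coact_in_car comod_hom_def)
  qed (use f'_in in auto)
  moreover have "bij_betw f' (car D) (car C)"
    unfolding f'_def by (rule bij_betw_inv_into[OF bij])
  ultimately show ?thesis unfolding comod_isomorphic_def by blast
qed

end

locale comodule_hom = C: comodule k u C + D: comodule k u D
  for k u and C :: "('k::field, 'm::ab_group_add, 'g::{finite,ab_group_add}) comod"
    and D :: "('k, 'n::ab_group_add, 'g) comod" +
  fixes f :: "'m \<Rightarrow> 'n"
  assumes hom: "comod_hom k C D f"
begin

lemma in_car: "x \<in> car C \<Longrightarrow> f x \<in> car D"
  using hom by (simp add: comod_hom_def)

lemma map_add: "x \<in> car C \<Longrightarrow> y \<in> car C \<Longrightarrow> f (x + y) = f x + f y"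
  using hom by (simp add: comod_hom_def)

lemma map_scale: "x \<in> car C \<Longrightarrow> f (scl C a x) = scl D a (f x)"
  using hom by (simp add: comod_hom_def)

lemma map_coact: "b \<in> abasis k \<Longrightarrow> x \<in> car C \<Longrightarrow> f (coact C b x) = coact D b (f x)"
  using hom by (simp add: comod_hom_def)

lemma map_zero: "f 0 = 0"
  using map_add[of 0 0] C.zero_in_car by simp

lemma map_sum: "(\<And>i. i \<in> I \<Longrightarrow> v i \<in> car C) \<Longrightarrow> f (sum v I) = (\<Sum>i\<in>I. f (v i))"
  by (induct I rule: infinite_finite_induct) (auto simp: map_zero map_add C.sum_in_car)

lemma map_dual_act: "y \<in> car C \<Longrightarrow> f (dual_act C k \<alpha> y) = dual_act D k \<alpha> (f y)"
  unfolding dual_act_def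
  by (subst map_sum) (auto intro!: sum.cong simp: map_scale map_coact C.coact_in_car C.scale_in_car)

lemma image_subcomodule: "subcomodule k D (f ` car C)"
  unfolding subcomodule_def D.V.subspace_def
proof (intro conjI ballI allI)
  show "0 \<in> f ` car C"
    using map_zero C.zero_in_car by force
  show "x + y \<in> f ` car C" if "x \<in> f ` car C" "y \<in> f ` car C" for x y
    using that map_add C.add_in_car by (metis (no_types, lifting) imageE imageI)
  show "scl D a x \<in> f ` car C" if "x \<in> f ` car C" for a x
    using that map_scale C.scale_in_car by (metis (no_types, lifting) imageE imageI)
  show "coact D b x \<in> f ` car C" if "b \<in> abasis k" "x \<in> f ` car C" for b x
    using that map_coact C.coact_in_car by (metis (no_types, lifting) imageE imageI)
qed (use in_car in auto)

end

lemma comodule_kg: "comodule k u (kg g :: ('k::field, unit \<Rightarrow> 'k, 'g::{finite,ab_group_add}) comod)"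
  by unfold_locales (rule is_comodule_kg)

lemma comodule_Pg:
  "comodule k u (Pg k u g :: ('k::field, nat set \<times> 'g::{finite,ab_group_add} \<Rightarrow> 'k, 'g) comod)"
  by unfold_locales (rule is_comodule_Pg)

section \<open>Simple comodules\<close>

lemma simple_kg:
  fixes u :: "'g::{finite,ab_group_add}"
  shows "simple_comodule k u (kg g :: ('k::field, unit \<Rightarrow> 'k, 'g) comod)"
  unfolding simple_comodule_def
proof (intro conjI allI impI)
  have "(\<lambda>_. 1) \<noteq> (0 :: unit \<Rightarrow> 'k)"
    by (simp add: fun_eq_iff)
  then show "car (kg g :: ('k, unit \<Rightarrow> 'k, 'g) comod) \<noteq> {0}"
    by auto
next
  fix N assume "subcomodule k (kg g :: ('k, unit \<Rightarrow> 'k, 'g) comod) N"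
  then have sub: "module.subspace fscale N" by (simp add: subcomodule_def)
  show "N = {0} \<or> N = car (kg g :: ('k, unit \<Rightarrow> 'k, 'g) comod)"
  proof (cases "N = {0}")
    case False
    then obtain w where w: "w \<in> N" "w \<noteq> 0"
      using module.subspace_0[OF module_fscale sub] by blast
    then have "w () \<noteq> 0" by (auto simp: fun_eq_iff)
    then have "fscale (v () / w ()) w = v" for v :: "unit \<Rightarrow> 'k"
      by (simp add: fscale_def fun_eq_iff)
    then have "v \<in> N" for v
      using module.subspace_scale[OF module_fscale sub w(1), of "v () / w ()"] by simp
    then show ?thesis by auto
  qed simp
qed (rule is_comodule_kg)

lemma kg_isomorphic_imp_eq:
  fixes u :: "'g::{finite,ab_group_add}"
  assumes "comod_isomorphic k (kg g :: ('k::field, unit \<Rightarrow> 'k, 'g) comod) (kg h)"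
  shows "g = h"
proof (rule ccontr)
  assume "g \<noteq> h"
  obtain f where hom: "comod_hom k (kg g :: ('k, unit \<Rightarrow> 'k, 'g) comod) (kg h) f" and "inj f"
    using assms by (auto simp: comod_isomorphic_def bij_betw_def)
  interpret comodule_hom k u "kg g :: ('k, unit \<Rightarrow> 'k, 'g) comod" "kg h" f
    using hom by unfold_locales (rule is_comodule_kg)+
  have "f (\<lambda>_. 1) = f (coact (kg g) ({}, g) (\<lambda>_. 1))"
    by simp
  also have "\<dots> = 0"
    using map_coact[of "({}, g)"] \<open>g \<noteq> h\<close> by simp
  finally have "(\<lambda>_. 1) = (0 :: unit \<Rightarrow> 'k)"
    using \<open>inj f\<close> map_zero by (metis injD)
  then show False by (simp add: fun_eq_iff)
qed

context comodule
begin

lemma simple_isomorphic_kg: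
  assumes "simple_comodule k u C"
  shows "\<exists>g. comod_isomorphic k C (kg g :: ('k, unit \<Rightarrow> 'k, 'g) comod)"
proof -
  obtain x where x: "x \<in> car C" "x \<noteq> 0"
    using assms zero_in_car by (auto simp: simple_comodule_def)
  obtain g z where z: "z \<in> car C" "z \<noteq> 0"
    and grouplike: "\<And>b. b \<in> abasis k \<Longrightarrow> coact C b z = (if b = ({}, g) then z else 0)"
    using exists_grouplike[OF x] by blast
  define \<phi> where "\<phi> w = scl C (w ()) z" for w :: "unit \<Rightarrow> 'k"
  have hom: "comod_hom k (kg g) C \<phi>"
    unfolding comod_hom_def \<phi>_def
    using z grouplike by (auto simp: scale_in_car coact_scale V.scale_left_distrib fscale_def)
  interpret \<phi>: comodule_hom k u "kg g :: ('k, unit \<Rightarrow> 'k, 'g) comod" C \<phi>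
    using hom by unfold_locales (rule is_comodule_kg)
  have "z \<in> \<phi> ` car (kg g)"
    by (rule image_eqI[where x = "\<lambda>_. 1"]) (simp_all add: \<phi>_def)
  then have "\<phi> ` car (kg g) = car C"
    using assms \<phi>.image_subcomodule z(2) unfolding simple_comodule_def by blast
  moreover have "inj \<phi>"
    using z(2) by (auto intro!: injI simp: \<phi>_def fun_eq_iff dest: V.scale_right_imp_eq)
  ultimately have "comod_isomorphic k (kg g) C"
    using hom by (auto simp: comod_isomorphic_def bij_betw_def)
  then show ?thesis
    using comodule.isomorphic_sym[OF comodule_kg] by blast
qed

end

section \<open>Projectivity of P_g\<close>

lemma dual_act_Pg_top:
  fixes u :: "'g::{finite,ab_group_add}" and \<beta> :: "nat set \<times> 'g \<Rightarrow> 'k::field"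
  assumes "S \<subseteq> {..<k}"
  shows "dual_act (Pg k u g) k \<beta> (indic ({..<k}, g)) (S, g)
       = cross_sign S ({..<k} - S) * \<beta> ({..<k} - S, ((+) u ^^ card S) g)"
proof -
  have "dual_act (Pg k u g) k \<beta> (indic ({..<k}, g)) (S, g)
      = (\<Sum>b\<in>abasis k. \<beta> b * cop_coeff u ({..<k}, g) b (S, g))"
    by (simp add: dual_act_def sum_apply fscale_def coact_Pg_indic)
  also have "\<dots> = \<beta> ({..<k} - S, ((+) u ^^ card S) g) * cross_sign S ({..<k} - S)"
    using assms by (subst sum_eq_single[where a = "({..<k} - S, ((+) u ^^ card S) g)"])
      (auto split: if_splits)
  finally show ?thesis by (simp add: mult.commute)
qed

text \<open>The coefficient x (S, g) is placed at the complementary basis element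
({..<k} - S, u^|S| g), whose coproduct component takes the top element x_{0..k-1} g to x_S g
with sign cross_sign S ({..<k} - S).\<close>

definition Pg_functional :: "nat \<Rightarrow> 'g::ab_group_add \<Rightarrow> 'g \<Rightarrow> (nat set \<times> 'g \<Rightarrow> 'k::comm_ring_1)
    \<Rightarrow> nat set \<times> 'g \<Rightarrow> 'k" where
  "Pg_functional k u g x b =
     (if fst b \<subseteq> {..<k} \<and> snd b = ((+) u ^^ card ({..<k} - fst b)) g
      then cross_sign ({..<k} - fst b) (fst b) * x ({..<k} - fst b, g) else 0)"

lemma dual_act_Pg_functional:
  fixes u :: "'g::{finite,ab_group_add}"
  assumes x: "x \<in> car (Pg k u g :: ('k::field, nat set \<times> 'g \<Rightarrow> 'k, 'g) comod)"
  shows "dual_act (Pg k u g) k (Pg_functional k u g x) (indic ({..<k}, g)) = x"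
proof
  interpret P: comodule k u "Pg k u g :: ('k, nat set \<times> 'g \<Rightarrow> 'k, 'g) comod"
    by (rule comodule_Pg)
  fix y :: "nat set \<times> 'g"
  obtain S l where y: "y = (S, l)" by fastforce
  show "dual_act (Pg k u g) k (Pg_functional k u g x) (indic ({..<k}, g)) y = x y"
  proof (cases "S \<subseteq> {..<k} \<and> l = g")
    case True
    then have "{..<k} - ({..<k} - S) = S" by auto
    with True show ?thesis
      by (simp add: y dual_act_Pg_top Pg_functional_def mult.assoc[symmetric])
  next
    case False
    have "dual_act (Pg k u g) k (Pg_functional k u g x) (indic ({..<k}, g)) \<in> fspace (Pbasis k g)"
      using P.dual_act_in_car indic_in_Pg by force
    with False x show ?thesis
      by (simp add: y fspace_outside)
  qed
qed

lemma Pg_functional_coact: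
  fixes u :: "'g::{finite,ab_group_add}"
  assumes x: "x \<in> car (Pg k u g :: ('k::field, nat set \<times> 'g \<Rightarrow> 'k, 'g) comod)"
    and c: "c \<in> abasis k" and b: "b \<in> abasis k"
    and deg: "((+) u ^^ card (fst b)) (snd b) = ((+) u ^^ k) g"
  shows "(\<Sum>b'\<in>abasis k. Pg_functional k u g x b' * cop_coeff u b b' c)
       = Pg_functional k u g (coact (Pg k u g) c x) b"
proof -
  interpret P: comodule k u "Pg k u g :: ('k, nat set \<times> 'g \<Rightarrow> 'k, 'g) comod"
    by (rule comodule_Pg)
  obtain B h where b_eq: "b = (B, h)" by fastforce
  have B_sub: "B \<subseteq> {..<k}" using b by (simp add: b_eq)
  define S where "S = {..<k} - B"
  have B: "B = {..<k} - S" "S \<subseteq> {..<k}"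
    using B_sub unfolding S_def by auto
  have "card S = k - card B"
    using B_sub unfolding S_def by (simp add: card_Diff_subset finite_subset)
  moreover have "card B \<le> k"
    using card_mono[OF finite_lessThan B_sub] by simp
  ultimately have "card B + card S = k" by simp
  then have "((+) u ^^ card B) h = ((+) u ^^ card B) (((+) u ^^ card S) g)"
    using deg by (simp add: b_eq funpow_add[symmetric, THEN fun_cong, simplified])
  then have b_S: "b = ({..<k} - S, ((+) u ^^ card S) g)"
    using B by (simp add: b_eq)
  have top: "indic ({..<k}, g) \<in> car (Pg k u g :: ('k, nat set \<times> 'g \<Rightarrow> 'k, 'g) comod)"
    by (rule indic_in_Pg) simp
  have "dual_act (Pg k u g) k (\<lambda>b'. \<Sum>b''\<in>abasis k. Pg_functional k u g x b'' * cop_coeff u b' b'' c)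
          (indic ({..<k}, g))
      = dual_act (Pg k u g) k (Pg_functional k u g (coact (Pg k u g) c x)) (indic ({..<k}, g))"
    using P.coact_dual_act[OF c top, symmetric] dual_act_Pg_functional[OF x]
      dual_act_Pg_functional[OF P.coact_in_car[OF c x]] by simp
  from fun_cong[OF this, of "(S, g)"] show ?thesis
    unfolding dual_act_Pg_top[OF B(2)] b_S by simp
qed

lemma coact_Pg_top:
  fixes u :: "'g::{finite,ab_group_add}"
  shows "coact (Pg k u g :: ('k::field, nat set \<times> 'g \<Rightarrow> 'k, 'g) comod) ({}, ((+) u ^^ k) g)
           (indic ({..<k}, g)) = indic ({..<k}, g)"
proof
  fix y :: "nat set \<times> 'g"
  obtain S l where y: "y = (S, l)" by fastforce
  show "coact (Pg k u g :: ('k, nat set \<times> 'g \<Rightarrow> 'k, 'g) comod) ({}, ((+) u ^^ k) g) (indic ({..<k}, g)) y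
      = indic ({..<k}, g) y"
    by (simp add: y coact_Pg_indic) (auto simp: indic_def)
qed

lemma projective_Pg:
  fixes u :: "'g::{finite,ab_group_add}"
    and TC :: "'c::ab_group_add itself" and TD :: "'d::ab_group_add itself"
  shows "comod_projective k u (Pg k u g :: ('k::field, nat set \<times> 'g \<Rightarrow> 'k, 'g) comod) TC TD"
  unfolding comod_projective_def
proof (intro conjI allI impI)
  fix M :: "('k, 'c, 'g) comod" and N :: "('k, 'd, 'g) comod" and f q
  assume M: "is_comodule k u M" and N: "is_comodule k u N" and f: "comod_hom k M N f"
    and f_onto: "f ` car M = car N" and q: "comod_hom k (Pg k u g) N q"
  interpret M: comodule k u M by (rule comodule.intro[OF M])
  interpret P: comodule k u "Pg k u g :: ('k, nat set \<times> 'g \<Rightarrow> 'k, 'g) comod"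
    by (rule comodule_Pg)
  interpret f: comodule_hom k u M N f
    using M N f by unfold_locales
  interpret q: comodule_hom k u "Pg k u g :: ('k, nat set \<times> 'g \<Rightarrow> 'k, 'g) comod" N q
    using N q by unfold_locales (rule is_comodule_Pg)
  define t :: "nat set \<times> 'g \<Rightarrow> 'k" where "t = indic ({..<k}, g)"
  define h where "h = ((+) u ^^ k) g"
  have t: "t \<in> car (Pg k u g)"
    unfolding t_def by (rule indic_in_Pg) simp
  obtain m0 where m0: "m0 \<in> car M" "f m0 = q t"
    using q.in_car[OF t] f_onto by (metis imageE)
  define m where "m = coact M ({}, h) m0"
  have m: "m \<in> car M"
    unfolding m_def by (rule M.coact_in_car[OF _ m0(1)]) simp
  have fm: "f m = q t"
    unfolding m_def using m0 t
    by (simp add: f.map_coact flip: q.map_coact) (simp add: t_def h_def coact_Pg_top)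
  define H where "H x = dual_act M k (Pg_functional k u g x) m" for x
  have "comod_hom k (Pg k u g) M H"
    unfolding comod_hom_def
  proof (intro conjI ballI allI)
    fix x y :: "nat set \<times> 'g \<Rightarrow> 'k"
    have "Pg_functional k u g (x + y) = (\<lambda>b. Pg_functional k u g x b + Pg_functional k u g y b)"
      by (simp add: Pg_functional_def fun_eq_iff algebra_simps)
    then show "H (x + y) = H x + H y"
      unfolding H_def by (simp add: M.dual_act_add)
  next
    fix a and x :: "nat set \<times> 'g \<Rightarrow> 'k"
    have "Pg_functional k u g (scl (Pg k u g) a x) = (\<lambda>b. a * Pg_functional k u g x b)"
      by (simp add: Pg_functional_def fun_eq_iff fscale_def algebra_simps)
    then show "H (scl (Pg k u g) a x) = scl M a (H x)"
      unfolding H_def by (simp add: M.dual_act_scale)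
  next
    fix c :: "nat set \<times> 'g" and x
    assume c: "c \<in> abasis k" and x: "x \<in> car (Pg k u g :: ('k, nat set \<times> 'g \<Rightarrow> 'k, 'g) comod)"
    have agree: "scl M (\<Sum>b'\<in>abasis k. Pg_functional k u g x b' * cop_coeff u b b' c) (coact M b m)
        = scl M (Pg_functional k u g (coact (Pg k u g) c x) b) (coact M b m)"
      if b: "b \<in> abasis k" for b
    proof (cases "((+) u ^^ card (fst b)) (snd b) = h")
      case True
      then show ?thesis
        using Pg_functional_coact[OF x c b] by (simp add: h_def)
    next
      case False
      then have "coact M b m = 0"
        unfolding m_def using M.coact_coact_grouplike[OF b m0(1)] by auto
      then show ?thesis by simp
    qed
    have "coact M c (H x) = dual_act M k (\<lambda>b. \<Sum>b'\<in>abasis k. Pg_functional k u g x b' * cop_coeff u b b' c) m"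
      unfolding H_def by (rule M.coact_dual_act[OF c m])
    also have "\<dots> = H (coact (Pg k u g) c x)"
      unfolding H_def dual_act_def using agree by (intro sum.cong) auto
    finally show "H (coact (Pg k u g) c x) = coact M c (H x)" ..
  qed (auto simp: H_def M.dual_act_in_car[OF m])
  moreover have "f (H x) = q x" if x: "x \<in> car (Pg k u g)" for x
  proof -
    have "f (H x) = dual_act N k (Pg_functional k u g x) (q t)"
      unfolding H_def f.map_dual_act[OF m] fm ..
    also have "\<dots> = q x"
      using q.map_dual_act[OF t, of "Pg_functional k u g x"] dual_act_Pg_functional[OF x]
      by (simp add: t_def)
    finally show ?thesis .
  qed
  ultimately show "\<exists>h. comod_hom k (Pg k u g) M h \<and> (\<forall>x\<in>car (Pg k u g). f (h x) = q x)"
    by blast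
qed (rule is_comodule_Pg)

section \<open>P_g as a projective cover\<close>

lemma indic_in_subcomodule_Pg:
  fixes u :: "'g::{finite,ab_group_add}"
  assumes N: "subcomodule k (Pg k u g :: ('k::field, nat set \<times> 'g \<Rightarrow> 'k, 'g) comod) N"
    and x: "x \<in> N" "x ({..<k}, g) = 1"
  shows "S \<subseteq> {..<k} \<Longrightarrow> indic (S, g) \<in> N"
proof (induction "card S" arbitrary: S rule: less_induct)
  case less
  have sub: "module.subspace fscale N" and x_car: "x \<in> fspace (Pbasis k g)"
    using N x by (auto simp: subcomodule_def)
  define c where "c = ({..<k} - S, ((+) u ^^ card S) g)"
  define z where "z = coact (Pg k u g) c x"
  have z: "z \<in> N"
    using N x unfolding z_def subcomodule_def by (simp add: c_def)
  have "z \<in> fspace ((\<lambda>S'. (S', g)) ` Pow S)"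
    unfolding fspace_def z_def coact_Pg
  proof (intro CollectI allI impI sum.neutral ballI)
    fix d b :: "nat set \<times> 'g" assume "d \<notin> (\<lambda>S'. (S', g)) ` Pow S"
    then show "x b * cop_coeff u b c d = 0"
      using fspace_outside[OF x_car, of b] by (cases b; cases d) (auto simp: c_def)
  qed
  moreover have "finite (Pow S)"
    using less.prems finite_subset by blast
  ultimately have "z = (\<Sum>S'\<in>Pow S. fscale (z (S', g)) (indic (S', g)))"
    using sum_indic_fspace[of "(\<lambda>S'. (S', g)) ` Pow S" z] by (simp add: sum.reindex inj_on_def)
  also have "\<dots> = fscale (z (S, g)) (indic (S, g)) + (\<Sum>S'\<in>Pow S - {S}. fscale (z (S', g)) (indic (S', g)))"
    using \<open>finite (Pow S)\<close> by (rule sum.remove) simp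
  finally have z_split: "z = fscale (z (S, g)) (indic (S, g)) + (\<Sum>S'\<in>Pow S - {S}. fscale (z (S', g)) (indic (S', g)))" .
  have "z (S, g) = (\<Sum>b\<in>abasis k. x b * cop_coeff u b c (S, g))"
    unfolding z_def coact_Pg ..
  also have "\<dots> = cross_sign S ({..<k} - S)"
    using fspace_outside[OF x_car] less.prems x(2)
    by (subst sum_eq_single[where a = "({..<k}, g)"]) (auto simp: c_def split: if_splits)
  finally have z_top: "z (S, g) = cross_sign S ({..<k} - S)" .
  have "indic (S', g) \<in> N" if "S' \<in> Pow S - {S}" for S'
  proof (rule less.hyps)
    show "card S' < card S"
      using that finite_subset[OF less.prems] by (intro psubset_card_mono) auto
  qed (use that less.prems in auto)
  then have R: "(\<Sum>S'\<in>Pow S - {S}. fscale (z (S', g)) (indic (S', g))) \<in> N"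
    by (intro module.subspace_sum[OF module_fscale sub] module.subspace_scale[OF module_fscale sub])
  have "indic (S, g) = fscale (cross_sign S ({..<k} - S))
      (z - (\<Sum>S'\<in>Pow S - {S}. fscale (z (S', g)) (indic (S', g))))"
    by (subst z_split) (simp add: z_top fscale_def fun_eq_iff mult.assoc[symmetric])
  then show ?case
    using z R by (simp add: module.subspace_diff[OF module_fscale sub] module.subspace_scale[OF module_fscale sub])
qed

lemma projective_cover_Pg:
  fixes u :: "'g::{finite,ab_group_add}"
    and TC :: "'c::ab_group_add itself" and TD :: "'d::ab_group_add itself"
  shows "is_projective_cover k u (Pg k u g :: ('k::field, nat set \<times> 'g \<Rightarrow> 'k, 'g) comod)
           (kg (((+) u ^^ k) g) :: ('k, unit \<Rightarrow> 'k, 'g) comod) TC TD"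
  unfolding is_projective_cover_def
proof (intro conjI exI)
  define \<pi> where "\<pi> x = (\<lambda>_::unit. x ({..<k}, g))" for x :: "nat set \<times> 'g \<Rightarrow> 'k"
  have top_coeff: "coact (Pg k u g) b x ({..<k}, g) = (if b = ({}, ((+) u ^^ k) g) then x ({..<k}, g) else 0)"
    if "b \<in> abasis k" for b x
  proof -
    obtain B h where b: "b = (B, h)" by fastforce
    have "coact (Pg k u g) b x ({..<k}, g) = x ({..<k}, g) * cop_coeff u ({..<k}, g) b ({..<k}, g)"
      unfolding coact_Pg using that
      by (subst sum_eq_single[where a = "({..<k}, g)"]) (auto simp: b split: if_splits)
    then show ?thesis
      using that by (auto simp: b)
  qed
  show "comod_hom k (Pg k u g) (kg (((+) u ^^ k) g)) \<pi>"
    unfolding comod_hom_def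
  proof (intro conjI ballI allI)
    fix b :: "nat set \<times> 'g" and x assume "b \<in> abasis k"
    then show "\<pi> (coact (Pg k u g) b x) = coact (kg (((+) u ^^ k) g)) b (\<pi> x)"
      by (simp add: top_coeff \<pi>_def fun_eq_iff)
  qed (auto simp: \<pi>_def fscale_def)
  show "\<pi> ` car (Pg k u g) = car (kg (((+) u ^^ k) g) :: ('k, unit \<Rightarrow> 'k, 'g) comod)"
  proof -
    have "w = \<pi> (fscale (w ()) (indic ({..<k}, g)))" for w
      by (simp add: \<pi>_def fscale_def indic_def fun_eq_iff)
    moreover have "fscale a (indic ({..<k}, g)) \<in> car (Pg k u g)" for a
      using indic_in_Pg[of "({..<k}, g)" k] by (auto simp: fspace_def fscale_def)
    ultimately show ?thesis by auto
  qed
  show "\<forall>N. subcomodule k (Pg k u g) N \<and> \<pi> ` N = car (kg (((+) u ^^ k) g) :: ('k, unit \<Rightarrow> 'k, 'g) comod)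
          \<longrightarrow> N = car (Pg k u g)"
  proof (intro allI impI)
    fix N assume "subcomodule k (Pg k u g) N \<and> \<pi> ` N = car (kg (((+) u ^^ k) g) :: ('k, unit \<Rightarrow> 'k, 'g) comod)"
    then have N: "subcomodule k (Pg k u g :: ('k, nat set \<times> 'g \<Rightarrow> 'k, 'g) comod) N"
      and "(\<lambda>_. 1) \<in> \<pi> ` N" by auto
    then obtain x where x: "x \<in> N" "x ({..<k}, g) = 1"
      by (auto simp: \<pi>_def fun_eq_iff)
    have sub: "module.subspace fscale N" "N \<subseteq> car (Pg k u g)"
      using N by (auto simp: subcomodule_def)
    have "y \<in> N" if y: "y \<in> fspace (Pbasis k g)" for y
    proof -
      have "(\<Sum>S\<in>Pow {..<k}. fscale (y (S, g)) (indic (S, g))) \<in> N"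
        using indic_in_subcomodule_Pg[OF N x]
        by (intro module.subspace_sum[OF module_fscale sub(1)] module.subspace_scale[OF module_fscale sub(1)]) auto
      moreover have "(\<Sum>p\<in>Pbasis k g. fscale (y p) (indic p)) = y"
        using y by (intro sum_indic_fspace) auto
      ultimately show ?thesis by (simp add: sum_Pbasis)
    qed
    with sub(2) show "N = car (Pg k u g)" by auto
  qed
qed (rule projective_Pg, rule is_comodule_kg)

section \<open>Tensor products with k_h\<close>

lemma wedge_act_empty: "wedge_act act g {} Q = (if Q = {} then 1 else 0)"
proof -
  have bij: "{\<sigma> \<in> {} \<rightarrow>\<^sub>E Q. bij_betw \<sigma> {} Q} = (if Q = {} then {\<lambda>_. undefined} else {})"
    by (auto simp: PiE_def extensional_def bij_betw_def fun_eq_iff)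
  show ?thesis unfolding wedge_act_def bij by simp
qed

lemma mult_coeff_group_right:
  "mult_coeff act b ({}, h) e = (if fst e = fst b \<and> snd e = snd b + h then 1 else 0)"
  by (auto simp: mult_coeff_def wedge_act_empty)

lemma coact_tensor_kg:
  fixes u :: "'g::{finite,ab_group_add}" and M :: "('k::field, 'i \<Rightarrow> 'k, 'g) comod"
  assumes "e \<in> abasis k"
  shows "coact (comod_tensor k act I M UNIV (kg h)) e F (i, j)
       = (\<Sum>p\<in>I. F (p, ()) * coact M (fst e, snd e - h) (indic p) i)"
proof -
  obtain E l where e: "e = (E, l)" by fastforce
  have "coact (comod_tensor k act I M UNIV (kg h)) e F (i, j)
      = (\<Sum>b\<in>abasis k. mult_coeff act b ({}, h) e *
          (\<Sum>p\<in>I \<times> UNIV. F p * coact M b (indic (fst p)) i))"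
    unfolding comod_tensor_def
    by (simp, intro sum.cong refl, subst sum_eq_single[where a = "({}, h)"]) (auto simp: indic_def)
  also have "\<dots> = (\<Sum>p\<in>I \<times> UNIV. F p * coact M (fst e, snd e - h) (indic (fst p)) i)"
    using assms
    by (subst sum_eq_single[where a = "(fst e, snd e - h)"]) (auto simp: e mult_coeff_group_right)
  also have "\<dots> = (\<Sum>p\<in>I. F (p, ()) * coact M (fst e, snd e - h) (indic p) i)"
    by (rule sum.reindex_bij_witness[where i = "\<lambda>p. (p, ())" and j = fst]) auto
  finally show ?thesis .
qed

lemma tensor_kg_kg_isomorphic:
  fixes u :: "'g::{finite,ab_group_add}"
  shows "comod_isomorphic k (comod_tensor k act UNIV (kg g) UNIV (kg h) :: ('k::field, unit \<times> unit \<Rightarrow> 'k, 'g) comod)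
           (kg (g + h))"
proof -
  define f where "f F = (\<lambda>_::unit. F ((), ()))" for F :: "unit \<times> unit \<Rightarrow> 'k"
  have "comod_hom k (comod_tensor k act UNIV (kg g) UNIV (kg h)) (kg (g + h)) f"
    unfolding comod_hom_def
  proof (intro conjI ballI allI)
    fix b :: "nat set \<times> 'g" and F assume "b \<in> abasis k"
    then have "coact (comod_tensor k act UNIV (kg g) UNIV (kg h)) b F ((), ())
        = (if (fst b, snd b - h) = ({}, g) then F ((), ()) else 0)"
      by (subst coact_tensor_kg) (simp_all add: UNIV_unit indic_def)
    then show "f (coact (comod_tensor k act UNIV (kg g) UNIV (kg h)) b F) = coact (kg (g + h)) b (f F)"
      by (cases b) (auto simp: f_def fun_eq_iff diff_eq_eq)
  qed (auto simp: f_def comod_tensor_def fscale_def)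
  moreover have "bij_betw f (car (comod_tensor k act UNIV (kg g) UNIV (kg h))) (car (kg (g + h)))"
    by (rule bij_betwI[where g = "\<lambda>w _. w ()"]) (auto simp: f_def comod_tensor_def)
  ultimately show ?thesis
    unfolding comod_isomorphic_def by blast
qed

lemma tensor_Pg_kg_isomorphic:
  fixes u :: "'g::{finite,ab_group_add}"
  shows "comod_isomorphic k (comod_tensor k act {(S, l). S \<subseteq> {..<k} \<and> l = g} (Pg k u g) UNIV (kg h)
           :: ('k::field, (nat set \<times> 'g) \<times> unit \<Rightarrow> 'k, 'g) comod) (Pg k u (g + h))"
proof -
  define T where "T = (comod_tensor k act (Pbasis k g) (Pg k u g) UNIV (kg h)
    :: ('k, (nat set \<times> 'g) \<times> unit \<Rightarrow> 'k, 'g) comod)"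
  define f where "f F = (\<lambda>(S, l). F ((S, l - h), ()))" for F :: "(nat set \<times> 'g) \<times> unit \<Rightarrow> 'k"
  define f' where "f' x = (\<lambda>((S, l), _::unit). x (S, l + h))" for x :: "nat set \<times> 'g \<Rightarrow> 'k"
  have car_T: "car T = fspace (Pbasis k g \<times> UNIV)"
    by (simp add: T_def comod_tensor_def)
  have f_car: "f F \<in> car (Pg k u (g + h))" if "F \<in> car T" for F
    unfolding Pg_simps fspace_def f_def
    using fspace_outside[OF that[unfolded car_T]] by (auto simp: diff_eq_eq)
  have f'_car: "f' x \<in> car T" if "x \<in> car (Pg k u (g + h))" for x
    unfolding car_T fspace_def f'_def
    using fspace_outside[OF that[unfolded Pg_simps]] by auto
  have "comod_hom k T (Pg k u (g + h)) f"
    unfolding comod_hom_def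
  proof (intro conjI ballI allI)
    show "f F \<in> car (Pg k u (g + h))" if "F \<in> car T" for F
      using that by (rule f_car)
  next
    fix e :: "nat set \<times> 'g" and F assume e: "e \<in> abasis k" and F: "F \<in> car T"
    show "f (coact T e F) = coact (Pg k u (g + h)) e (f F)"
    proof
      fix y :: "nat set \<times> 'g"
      obtain S l where y: "y = (S, l)" by fastforce
      obtain E m where e_eq: "e = (E, m)" by fastforce
      have "coact (Pg k u (g + h)) e (f F) y
          = (\<Sum>b\<in>abasis k. F (b, ()) * cop_coeff u (fst b, snd b + h) e (S, l))"
        unfolding coact_Pg f_def y by (subst sum_abasis_translate[of _ _ h]) (simp add: split_beta)
      also have "\<dots> = (\<Sum>b\<in>Pbasis k g. F (b, ()) * cop_coeff u b (E, m - h) (S, l - h))"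
      proof (rule sum.mono_neutral_cong_right)
        show "\<forall>b\<in>abasis k - Pbasis k g. F (b, ()) * cop_coeff u (fst b, snd b + h) e (S, l) = 0"
          using F by (auto simp: car_T fspace_outside)
        show "F (b, ()) * cop_coeff u (fst b, snd b + h) e (S, l) = F (b, ()) * cop_coeff u b (E, m - h) (S, l - h)"
          if b: "b \<in> Pbasis k g" for b
        proof -
          obtain B where "b = (B, g)" using b unfolding Pbasis_def by blast
          then show ?thesis by (simp only: e_eq fst_conv snd_conv cop_coeff_translate)
        qed
      qed (auto simp: Pbasis_subset_abasis)
      also have "\<dots> = f (coact T e F) y"
        unfolding T_def f_def y using e
        by (simp add: coact_tensor_kg coact_Pg_indic e_eq subsetD[OF Pbasis_subset_abasis])
      finally show "f (coact T e F) y = coact (Pg k u (g + h)) e (f F) y" ..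
    qed
  qed (auto simp: T_def comod_tensor_def f_def fscale_def)
  moreover have "bij_betw f (car T) (car (Pg k u (g + h)))"
    by (rule bij_betwI[where g = f']) (use f_car f'_car in \<open>auto simp: f_def f'_def\<close>)
  ultimately show ?thesis
    unfolding comod_isomorphic_def T_def Pbasis_def by blast
qed

theorem theorem3p2:
  fixes k :: nat
    and u :: "'g::{finite, ab_group_add}"
    and act :: "'g \<Rightarrow> nat \<Rightarrow> nat \<Rightarrow> 'k::field_char_0"
    and TC :: "'c::ab_group_add itself" and TD :: "'d::ab_group_add itself"
  assumes alg_closed: "\<forall>p :: 'k poly. degree p > 0 \<longrightarrow> (\<exists>x. poly p x = 0)"
    and u_order2: "u \<noteq> 0" "u + u = 0"
    and act_unit: "\<forall>i<k. \<forall>j<k. act 0 i j = (if i = j then 1 else 0)"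
    and act_mult: "\<forall>g h. \<forall>i<k. \<forall>j<k. act (g + h) i j = (\<Sum>l<k. act g i l * act h l j)"
    and act_u: "\<forall>i<k. \<forall>j<k. act u i j = - (if i = j then 1 else 0)"
  shows
    "(\<forall>g. simple_comodule k u (kg g :: ('k, unit \<Rightarrow> 'k, 'g) comod))
     \<and> (\<forall>g h. comod_isomorphic k (kg g :: ('k, unit \<Rightarrow> 'k, 'g) comod) (kg h :: ('k, unit \<Rightarrow> 'k, 'g) comod) \<longrightarrow> g = h)
     \<and> (\<forall>C :: ('k, 'm::ab_group_add, 'g) comod. simple_comodule k u C \<longrightarrow>
          (\<exists>g. comod_isomorphic k C (kg g :: ('k, unit \<Rightarrow> 'k, 'g) comod)))
     \<and> (\<forall>g. is_projective_cover k u (Pg k u g :: ('k, nat set \<times> 'g \<Rightarrow> 'k, 'g) comod)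
                (kg (((+) u ^^ k) g) :: ('k, unit \<Rightarrow> 'k, 'g) comod) TC TD)
     \<and> (\<forall>g h. comod_isomorphic k
                (comod_tensor k act UNIV (kg g) UNIV (kg h) :: ('k, unit \<times> unit \<Rightarrow> 'k, 'g) comod)
                (kg (g + h) :: ('k, unit \<Rightarrow> 'k, 'g) comod))
     \<and> (\<forall>g h. comod_isomorphic k
                (comod_tensor k act {(S, l). S \<subseteq> {..<k} \<and> l = g} (Pg k u g) UNIV (kg h)
                   :: ('k, (nat set \<times> 'g) \<times> unit \<Rightarrow> 'k, 'g) comod)
                (Pg k u (g + h) :: ('k, nat set \<times> 'g \<Rightarrow> 'k, 'g) comod))"
proof (intro conjI allI impI)
  fix C :: "('k, 'm::ab_group_add, 'g) comod"
  assume simple: "simple_comodule k u C"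
  then interpret comodule k u C
    by (simp add: comodule_def simple_comodule_def)
  show "\<exists>g. comod_isomorphic k C (kg g :: ('k, unit \<Rightarrow> 'k, 'g) comod)"
    using simple by (rule simple_isomorphic_kg)
qed (blast intro: simple_kg kg_isomorphic_imp_eq projective_cover_Pg
    tensor_kg_kg_isomorphic tensor_Pg_kg_isomorphic)+

end
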